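(* Let $\epsilon\in(0,1)$, $h>0$, $u_0\in\mathbb{R}$, and let $(u_n)_{n\ge0}$ be generated by the explicit Euler scheme $$\frac{u_n-u_{n-1}}{h}+\frac{1}{\epsilon^2}\big(u_{n-1}^3-u_{n-1}\big)=0,\qquad n\ge 1.$$ (i) If $u_0\in\{0,1,-1\}$, then $u_n=\mathrm{sign}(u_0)$ for all $n\ge1$, for any $h>0$ and any $\epsilon$. (ii) If $u_0\notin\{0,1,-1\}$, define $h^*=h^*(u_0,\epsilon)=\frac{\epsilon^2}{u_0^2+|u_0|}$ if $|u_0|>1$ and $h^*=\frac{\epsilon^2}{2}$ if $0<|u_0|<1$. Then $h^*>0$, and for every $h\in(0,h^*]$ the sequence $(u_n)$ is monotone and converges to $\mathrm{sign}(u_0)$ as $n\to\infty$.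
   Context: The scheme discretizes the ODE $u'(t)+\frac{1}{\epsilon^2}(u^3-u)=0$, $u(0)=u_0$. Here $\mathrm{sign}(0)=0$, $\mathrm{sign}(x)=1$ for $x>0$, $\mathrm{sign}(x)=-1$ for $x<0$. *)

theory Defs
  imports Complex_Main
begin

fun euler_AC :: "real \<Rightarrow> real \<Rightarrow> real \<Rightarrow> nat \<Rightarrow> real" where
  "euler_AC h eps u0 0 = u0"
| "euler_AC h eps u0 (Suc n) =
     euler_AC h eps u0 n - h / eps^2 * ((euler_AC h eps u0 n)^3 - euler_AC h eps u0 n)"

definition hstar :: "real \<Rightarrow> real \<Rightarrow> real" where
  "hstar u0 eps = (if \<bar>u0\<bar> > 1 then eps^2 / (u0^2 + \<bar>u0\<bar>) else eps^2 / 2)"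

end

theory Submission
  imports Defs
begin

text \<open>With \<open>k = h / eps\<^sup>2\<close> the scheme iterates \<open>u \<mapsto> u - k (u\<^sup>3 - u)\<close>, an odd map whose fixed
  points are \<open>0, 1, -1\<close>. For \<open>0 < u < 1\<close> and \<open>k \<le> 1/2\<close> it moves \<open>u\<close> up without leaving
  \<open>(0, 1)\<close>; for \<open>1 \<le> u \<le> u\<^sub>0\<close> and \<open>k (u\<^sub>0\<^sup>2 + u\<^sub>0) \<le> 1\<close> it moves \<open>u\<close> down without
  leaving \<open>[1, u\<^sub>0]\<close>. Either way the orbit is monotone and bounded, so it converges, and
  by continuity its limit is a fixed point, which the bounds force to be \<open>1\<close>. Oddness
  transfers this to negative initial values.\<close>

definition ac_step :: "real \<Rightarrow> real \<Rightarrow> real" where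
  "ac_step k u = u - k * (u^3 - u)"

lemma euler_AC_Suc_ac_step:
  "euler_AC h eps u0 (Suc n) = ac_step (h / eps^2) (euler_AC h eps u0 n)"
  by (simp add: ac_step_def)

lemma ac_step_minus_self: "ac_step k u - u = k * u * (1 - u) * (1 + u)"
  by (simp add: ac_step_def algebra_simps power3_eq_cube)

lemma one_minus_ac_step: "1 - ac_step k u = (1 - u) * (1 - k * (u * (1 + u)))"
  by (simp add: ac_step_def algebra_simps power3_eq_cube)

lemma ac_step_fixed_iff:
  assumes "k \<noteq> 0"
  shows "ac_step k u = u \<longleftrightarrow> u \<in> {0, 1, -1}"
proof -
  have "ac_step k u = u \<longleftrightarrow> u * (1 - u) * (1 + u) = 0"
    using assms ac_step_minus_self[of k u] by (auto simp: mult.assoc)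
  also have "\<dots> \<longleftrightarrow> u \<in> {0, 1, -1}"
    by (auto simp: add_eq_0_iff)
  finally show ?thesis .
qed

lemma isCont_ac_step: "isCont (ac_step k) u"
  unfolding ac_step_def by (intro continuous_intros)

lemma ac_step_unit_interval:
  assumes "0 < k" "k \<le> 1/2" "0 < u" "u < 1"
  shows "u \<le> ac_step k u" "ac_step k u < 1"
proof -
  have "0 \<le> k * u * (1 - u) * (1 + u)"
    using assms by (intro mult_nonneg_nonneg) auto
  then show "u \<le> ac_step k u"
    using ac_step_minus_self[of k u] by simp
  have "u * (1 + u) < 2"
    using assms mult_strict_mono[of u 1 "1 + u" 2] by simp
  hence "k * (u * (1 + u)) < k * 2"
    using assms(1) by (rule mult_strict_left_mono)
  hence "k * (u * (1 + u)) < 1"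
    using assms(2) by linarith
  hence "0 < (1 - u) * (1 - k * (u * (1 + u)))"
    using assms(4) by simp
  thus "ac_step k u < 1"
    using one_minus_ac_step[of k u] by simp
qed

lemma ac_step_above_one:
  assumes "0 < k" "k * (M^2 + M) \<le> 1" "1 \<le> u" "u \<le> M"
  shows "ac_step k u \<le> u" "1 \<le> ac_step k u"
proof -
  have "k * u * (1 - u) * (1 + u) \<le> 0"
    using assms by (intro mult_nonpos_nonneg mult_nonneg_nonpos) auto
  then show "ac_step k u \<le> u"
    using ac_step_minus_self[of k u] by simp
  have "u * (1 + u) \<le> M * (1 + M)"
    using assms by (intro mult_mono) auto
  hence "k * (u * (1 + u)) \<le> k * (M * (1 + M))"
    using assms(1) by (simp add: mult_left_mono)
  also have "\<dots> \<le> 1"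
    using assms(2) by (simp add: power2_eq_square algebra_simps)
  finally have "(1 - u) * (1 - k * (u * (1 + u))) \<le> 0"
    using assms(3) by (intro mult_nonpos_nonneg) auto
  thus "1 \<le> ac_step k u"
    using one_minus_ac_step[of k u] by simp
qed

lemma LIMSEQ_orbit_fixed_point:
  fixes f :: "'a::t2_space \<Rightarrow> 'a"
  assumes "\<And>n. x (Suc n) = f (x n)" and "x \<longlonglongrightarrow> L" and "isCont f L"
  shows "f L = L"
proof -
  have "(\<lambda>n. x (Suc n)) \<longlonglongrightarrow> f L"
    unfolding assms(1) using isCont_tendsto_compose[OF assms(3,2)] .
  moreover have "(\<lambda>n. x (Suc n)) \<longlonglongrightarrow> L"
    using assms(2) by (rule LIMSEQ_Suc)
  ultimately show ?thesis
    by (rule LIMSEQ_unique)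
qed

lemma euler_AC_limit_equilibrium:
  assumes "euler_AC h eps u0 \<longlonglongrightarrow> L" and "h / eps^2 \<noteq> 0"
  shows "L \<in> {0, 1, -1}"
  using LIMSEQ_orbit_fixed_point[OF euler_AC_Suc_ac_step assms(1) isCont_ac_step]
    ac_step_fixed_iff[OF assms(2)] by blast

lemma euler_AC_equilibrium:
  assumes "u0 \<in> {0, 1, -1}"
  shows "euler_AC h eps u0 n = u0"
  using assms by (induction n) (auto simp: power3_eq_cube)

lemma euler_AC_uminus: "euler_AC h eps (- u0) n = - euler_AC h eps u0 n"
  by (induction n) (auto simp: algebra_simps power3_eq_cube)

lemma euler_AC_incseq_tendsto_one:
  assumes "0 < u0" "u0 < 1" "0 < h / eps^2" "h / eps^2 \<le> 1/2"
  shows "incseq (euler_AC h eps u0)" "euler_AC h eps u0 \<longlonglongrightarrow> 1"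
proof -
  let ?u = "euler_AC h eps u0"
  have bounds: "0 < ?u n \<and> ?u n < 1" for n
  proof (induction n)
    case 0
    then show ?case using assms by simp
  next
    case (Suc n)
    then have u: "0 < ?u n" "?u n < 1"
      by auto
    show ?case
      using ac_step_unit_interval[OF assms(3,4) u] u unfolding euler_AC_Suc_ac_step by linarith
  qed
  show inc: "incseq ?u"
    using ac_step_unit_interval(1)[OF assms(3,4)] bounds
    by (intro incseq_SucI) (simp only: euler_AC_Suc_ac_step)
  obtain L where L: "?u \<longlonglongrightarrow> L" "\<forall>n. ?u n \<le> L"
    using incseq_convergent[OF inc, of 1] bounds less_imp_le by blast
  have "L \<in> {0, 1, -1}"
    using euler_AC_limit_equilibrium[OF L(1) assms(3)[THEN dual_order.strict_implies_not_eq]] .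
  moreover have "u0 \<le> L"
    using L(2)[rule_format, of 0] by simp
  ultimately show "?u \<longlonglongrightarrow> 1"
    using L(1) assms(1) by auto
qed

lemma euler_AC_decseq_tendsto_one:
  assumes "1 < u0" "0 < h / eps^2" "h / eps^2 * (u0^2 + u0) \<le> 1"
  shows "decseq (euler_AC h eps u0)" "euler_AC h eps u0 \<longlonglongrightarrow> 1"
proof -
  let ?u = "euler_AC h eps u0"
  have bounds: "1 \<le> ?u n \<and> ?u n \<le> u0" for n
  proof (induction n)
    case 0
    then show ?case using assms by simp
  next
    case (Suc n)
    then have u: "1 \<le> ?u n" "?u n \<le> u0"
      by auto
    show ?case
      using ac_step_above_one[OF assms(2,3) u] u unfolding euler_AC_Suc_ac_step by linarith
  qed
  show dec: "decseq ?u"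
    using ac_step_above_one(1)[OF assms(2,3)] bounds
    by (intro decseq_SucI) (simp only: euler_AC_Suc_ac_step)
  obtain L where L: "?u \<longlonglongrightarrow> L"
    using decseq_convergent[OF dec, of 1] bounds by blast
  have "L \<in> {0, 1, -1}"
    using euler_AC_limit_equilibrium[OF L assms(2)[THEN dual_order.strict_implies_not_eq]] .
  moreover have "1 \<le> L"
    using LIMSEQ_le_const[OF L] bounds by blast
  ultimately show "?u \<longlonglongrightarrow> 1"
    using L by auto
qed

lemma hstar_pos:
  assumes "eps \<noteq> 0" "u0 \<noteq> 0"
  shows "0 < hstar u0 eps"
  using assms by (simp add: hstar_def add_pos_nonneg)

lemma hstar_uminus: "hstar (- u0) eps = hstar u0 eps"
  by (simp add: hstar_def)

lemma euler_AC_tendsto_one: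
  assumes "eps \<noteq> 0" "0 < u0" "u0 \<noteq> 1" "0 < h" "h \<le> hstar u0 eps"
  shows "(mono (euler_AC h eps u0) \<or> antimono (euler_AC h eps u0)) \<and>
         euler_AC h eps u0 \<longlonglongrightarrow> 1"
proof -
  have eps2: "0 < eps^2"
    using assms(1) by simp
  have k: "0 < h / eps^2"
    using assms(4) eps2 by simp
  show ?thesis
  proof (cases "u0 < 1")
    case True
    have "h / eps^2 \<le> 1/2"
      using assms(5) True assms(2) eps2 by (simp add: hstar_def divide_simps)
    then show ?thesis
      using euler_AC_incseq_tendsto_one[OF assms(2) True k] by blast
  next
    case False
    hence "1 < u0"
      using assms(3) by simp
    moreover have "h / eps^2 * (u0^2 + u0) \<le> 1"
      using assms(5) \<open>1 < u0\<close> eps2 by (simp add: hstar_def field_simps add_pos_pos)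
    ultimately show ?thesis
      using euler_AC_decseq_tendsto_one[OF _ k] by blast
  qed
qed

lemma euler_AC_tendsto_sgn:
  assumes "eps \<noteq> 0" "u0 \<notin> {0, 1, -1}" "0 < h" "h \<le> hstar u0 eps"
  shows "(mono (euler_AC h eps u0) \<or> antimono (euler_AC h eps u0)) \<and>
         euler_AC h eps u0 \<longlonglongrightarrow> sgn u0"
proof (cases "0 < u0")
  case True
  then show ?thesis
    using euler_AC_tendsto_one[OF assms(1) True _ assms(3,4)] assms(2) by simp
next
  case False
  hence "0 < - u0" "- u0 \<noteq> 1" "sgn u0 = -1"
    using assms(2) by auto
  moreover have "euler_AC h eps (- u0) = (\<lambda>n. - euler_AC h eps u0 n)"
    by (simp add: euler_AC_uminus fun_eq_iff)
  ultimately have mono: "antimono (euler_AC h eps u0) \<or> mono (euler_AC h eps u0)"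
    and lim: "(\<lambda>n. - euler_AC h eps u0 n) \<longlonglongrightarrow> - sgn u0"
    using euler_AC_tendsto_one[OF assms(1), of "- u0" h] assms(3,4)
    by (simp_all add: hstar_uminus decseq_eq_incseq)
  from tendsto_minus[OF lim] have "euler_AC h eps u0 \<longlonglongrightarrow> sgn u0"
    by simp
  with mono show ?thesis
    by blast
qed

theorem theorem2p2:
  fixes eps u0 :: real
  assumes "0 < eps" and "eps < 1"
  shows "(u0 \<in> {0, 1, -1} \<longrightarrow>
            (\<forall>h > 0. \<forall>n \<ge> 1. euler_AC h eps u0 n = sgn u0))
       \<and> (u0 \<notin> {0, 1, -1} \<longrightarrow>
            hstar u0 eps > 0 \<and>
            (\<forall>h. 0 < h \<and> h \<le> hstar u0 eps \<longrightarrow>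
               (mono (euler_AC h eps u0) \<or> antimono (euler_AC h eps u0)) \<and>
               euler_AC h eps u0 \<longlonglongrightarrow> sgn u0))"
proof (intro conjI impI)
  assume "u0 \<in> {0, 1, -1}"
  then show "\<forall>h > 0. \<forall>n \<ge> 1. euler_AC h eps u0 n = sgn u0"
    using euler_AC_equilibrium by auto
next
  assume "u0 \<notin> {0, 1, -1}"
  then show "0 < hstar u0 eps"
    using hstar_pos assms(1) by auto
next
  assume "u0 \<notin> {0, 1, -1}"
  then show "\<forall>h. 0 < h \<and> h \<le> hstar u0 eps \<longrightarrow>
      (mono (euler_AC h eps u0) \<or> antimono (euler_AC h eps u0)) \<and>
      euler_AC h eps u0 \<longlonglongrightarrow> sgn u0"
    using euler_AC_tendsto_sgn assms(1) by simp
qed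

end
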